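(* Let $B\ge1$, let $X$ be a random variable with a unimodal distribution on $G=\{0,\frac1B,\frac2B,\dots,1\}$, let $t\in G$ and $\eta:=\mathbb{E}(X)$. If $\eta\le1/3$, then \[\mathbb{P}(X\ge t)\le\begin{cases}\dfrac{2\eta-t+\frac1B}{t+\frac1B}&\text{if } t\in\bigl(\eta,\min(\tfrac32\eta+\tfrac1{2B},2\eta)\bigr],\\[2mm]\dfrac{\eta}{2t-\frac1B}&\text{if } t\in\bigl(\min(\tfrac32\eta+\tfrac1{2B},2\eta),\tfrac12\bigr],\\[2mm]\dfrac{2\eta(1-t+\frac1B)}{1+\frac1B}&\text{if } t\in(\tfrac12,1].\end{cases}\] Let $d:=-2(\eta-\tfrac12)(6\eta+1)+\frac{2-4\eta}{B}+\frac{(4\eta-1)^2}{B^2}$. If $\eta>1/3$ and $d>0$, then \[\mathbb{P}(X\ge t)\le\begin{cases}\dfrac{2\eta-t+\frac1B}{t+\frac1B}&\text{if } t\in\bigl(\eta,\tfrac12+\tfrac1{4\eta}(1+\tfrac1B-d^{1/2})\bigr],\\[2mm]\dfrac{2\eta(1-t+\frac1B)}{1+\frac1B}&\text{if } t\in\bigl(\tfrac12+\tfrac1{4\eta}(1+\tfrac1B-d^{1/2}),1\bigr].\end{cases}\] Finally, if $\eta>1/3$ and $d\le0$, then $\mathbb{P}(X\ge t)\le\dfrac{2\eta-t+\frac1B}{t+\frac1B}$.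
   Context: A distribution on $G=\{0,\frac1B,\dots,1\}$ with probability mass function $f$ (write $f_i=f(i/B)$) is unimodal if there is $m\in\{0,\dots,B\}$ with $f_0\le f_1\le\dots\le f_m$ and $f_m\ge f_{m+1}\ge\dots\ge f_B$. *)

theory Defs
  imports Complex_Main
begin

text \<open>A distribution on G = {0, 1/B, ..., 1} is given by its probability mass
  function f, written f i = f(i/B) for i = 0..B.\<close>

definition is_pmf_on_grid :: "nat \<Rightarrow> (nat \<Rightarrow> real) \<Rightarrow> bool" where
  "is_pmf_on_grid B f \<longleftrightarrow> (\<forall>i\<le>B. 0 \<le> f i) \<and> (\<Sum>i\<le>B. f i) = 1"

definition unimodal_grid :: "nat \<Rightarrow> (nat \<Rightarrow> real) \<Rightarrow> bool" where
  "unimodal_grid B f \<longleftrightarrow> (\<exists>m\<le>B. (\<forall>i j. i \<le> j \<and> j \<le> m \<longrightarrow> f i \<le> f j)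
                                   \<and> (\<forall>i j. m \<le> i \<and> i \<le> j \<and> j \<le> B \<longrightarrow> f j \<le> f i))"

definition grid_mean :: "nat \<Rightarrow> (nat \<Rightarrow> real) \<Rightarrow> real" where
  "grid_mean B f = (\<Sum>i\<le>B. (real i / real B) * f i)"

definition grid_tail :: "nat \<Rightarrow> (nat \<Rightarrow> real) \<Rightarrow> nat \<Rightarrow> real" where
  "grid_tail B f k = (\<Sum>i\<in>{k..B}. f i)"

end

theory Submission
  imports Defs
begin

text \<open>
  Measure everything in grid units: \<open>M = B \<eta> = \<Sum> i f i\<close> and \<open>P = P(X \<ge> k/B)\<close>, and let \<open>m\<close> be a
  mode. If \<open>k \<le> m + 1\<close>, then \<open>f\<close> increases on \<open>{0..<k}\<close>, so by Chebyshev's sum inequality the mass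
  below \<open>k\<close> sits on average at index at least \<open>(k - 1)/2\<close>; this gives \<open>(k + 1) P \<le> 2M - k + 1\<close>.
  If \<open>m + 2 \<le> k\<close>, we use that a unimodal pmf is a nonnegative combination of indicators of
  intervals containing its mode: a weight whose sum over every such interval is nonnegative has
  nonnegative expectation. For the weight \<open>\<tau> (2i - m) - [k \<le> i]\<close> with the least admissible slope
  \<open>\<tau>\<close> this bounds \<open>P\<close> either as before or by the tail of a mixture of the uniform distribution on
  some \<open>{0..b}\<close> with a point mass at \<open>0\<close>, which in turn is bounded by the Markov-type bound
  \<open>\<eta> / (2t - 1/B)\<close> and, for \<open>t > 1/2\<close>, by the third bound. After rescaling, the theorem follows
  by comparing the three bounds; the first and the third differ by a quadratic in \<open>t\<close> whose
  discriminant is \<open>d\<close>.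
\<close>

lemma double_sum_atLeastAtMost_real:
  assumes "a \<le> b"
  shows "2 * (\<Sum>i=a..b. real i) = real (b - a + 1) * (real a + real b)"
proof -
  have "{a..b} = {0 + a..(b - a) + a}" using assms by simp
  then have "(\<Sum>i=a..b. real i) = (\<Sum>j=0..b - a. real a + real j * 1)"
    by (simp only: sum.shift_bounds_cl_nat_ivl) (simp add: add.commute)
  also have "2 * \<dots> = real (b - a + 1) * (real a + real b)"
    using assms by (simp only: double_arith_series) (simp add: algebra_simps)
  finally show ?thesis .
qed

lemma count_ge_atLeastAtMost:
  assumes "a \<le> k"
  shows "(\<Sum>i=a..b. if k \<le> i then 1 else 0 :: real) = real (b + 1 - k)"
proof -
  have "{a..b} \<inter> {i. k \<le> i} = {k..b}" using assms by auto
  then show ?thesis by (simp add: sum.If_cases)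
qed

lemma sum_atMost_split:
  fixes k B :: nat
  assumes "k \<le> B"
  shows "(\<Sum>i\<le>B. g i) = (\<Sum>i<k. g i) + (\<Sum>i=k..B. g i)"
proof -
  have "{..B} = {..<k} \<union> {k..B}" "{..<k} \<inter> {k..B} = {}" using assms by auto
  then show ?thesis using sum.union_disjoint[of "{..<k}" "{k..B}" g] by simp
qed

lemma sum_index_mult_ge_of_increasing:
  fixes f :: "nat \<Rightarrow> real"
  assumes "\<And>i j. i \<le> j \<Longrightarrow> j < k \<Longrightarrow> f i \<le> f j"
  shows "(real k - 1) * (\<Sum>i<k. f i) \<le> 2 * (\<Sum>i<k. real i * f i)"
proof (cases "k = 0")
  case False
  have "real k * (\<Sum>i<k. f i * - real i) \<le> (\<Sum>i<k. f i) * (\<Sum>i<k. - real i)"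
    using assms Chebyshev_sum_upper[of k f "\<lambda>i. - real i"] by (simp add: atLeast0LessThan)
  then have cheb: "(\<Sum>i<k. real i) * (\<Sum>i<k. f i) \<le> real k * (\<Sum>i<k. real i * f i)"
    by (simp add: sum_negf algebra_simps)
  have gauss: "2 * (\<Sum>i<k. real i) = real k * (real k - 1)"
    using double_gauss_sum[of "k - 1", where 'a=real] False
    by (simp add: atLeast0LessThan[symmetric] atLeastLessThanSuc_atLeastAtMost[symmetric])
  have "real k * ((real k - 1) * (\<Sum>i<k. f i)) = 2 * ((\<Sum>i<k. real i) * (\<Sum>i<k. f i))"
    by (simp add: gauss mult.assoc)
  also have "\<dots> \<le> real k * (2 * (\<Sum>i<k. real i * f i))"
    using cheb by simp
  finally show ?thesis using False by simp
qed simp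

lemma sum_mult_unimodal_nonneg:
  fixes w g :: "nat \<Rightarrow> real"
  assumes "a \<le> m" "m \<le> b"
    and "\<And>a' b'. a \<le> a' \<Longrightarrow> a' \<le> m \<Longrightarrow> m \<le> b' \<Longrightarrow> b' \<le> b \<Longrightarrow> 0 \<le> (\<Sum>i=a'..b'. w i)"
    and "\<And>i. a \<le> i \<Longrightarrow> i \<le> b \<Longrightarrow> 0 \<le> g i"
    and "\<And>i j. a \<le> i \<Longrightarrow> i \<le> j \<Longrightarrow> j \<le> m \<Longrightarrow> g i \<le> g j"
    and "\<And>i j. m \<le> i \<Longrightarrow> i \<le> j \<Longrightarrow> j \<le> b \<Longrightarrow> g j \<le> g i"
  shows "0 \<le> (\<Sum>i=a..b. w i * g i)"
  using assms
proof (induction "b - a" arbitrary: a b g rule: less_induct)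
  case less
  note am = less.prems(1) and mb = less.prems(2) and W = less.prems(3) and g0 = less.prems(4)
    and up = less.prems(5) and down = less.prems(6)
  txt \<open>Subtracting \<open>min (g a) (g b)\<close> keeps \<open>g\<close> nonnegative and unimodal and kills an endpoint.\<close>
  have shift: "(\<Sum>i=a..b. w i * g i) = c * (\<Sum>i=a..b. w i) + (\<Sum>i=a..b. w i * (g i - c))" for c
    by (simp add: algebra_simps sum_subtractf sum_distrib_left)
  have "g a \<le> g m" "g b \<le> g m" using up[of a m] down[of m b] am mb by auto
  then consider "a = b" | "a < m" "g a \<le> g b" | "m < b" "g b \<le> g a"
    using am mb by (cases "a = m"; cases "b = m") (auto, linarith)
  then show ?case
  proof cases
    case 1
    then show ?thesis using W[of a b] g0[of a] am mb by simp
  next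
    case 2
    have "(\<Sum>i=a..b. w i * (g i - g a)) = (\<Sum>i=Suc a..b. w i * (g i - g a))"
      using am mb by (simp add: sum.atLeast_Suc_atMost)
    also have "0 \<le> \<dots>"
    proof (rule less.hyps[where g="\<lambda>i. g i - g a"])
      show "0 \<le> g i - g a" if "Suc a \<le> i" "i \<le> b" for i
        using up[of a i] down[of i b] 2 that by (cases "i \<le> m") auto
    qed (use 2 mb W up down in auto)
    finally show ?thesis
      using shift[of "g a"] W[of a b] g0[of a] am mb by simp
  next
    case 3
    then obtain b' where b': "b = Suc b'" by (cases b) auto
    have "(\<Sum>i=a..b. w i * (g i - g b)) = (\<Sum>i=a..b'. w i * (g i - g b))"
      using am 3 b' by simp
    also have "0 \<le> \<dots>"
    proof (rule less.hyps[where g="\<lambda>i. g i - g b"])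
      show "0 \<le> g i - g b" if "a \<le> i" "i \<le> b'" for i
        using up[of a i] down[of i b] 3 that b' by (cases "i \<le> m") auto
    qed (use 3 am b' W up down in auto)
    finally show ?thesis
      using shift[of "g b"] W[of a b] g0[of b] am mb by simp
  qed
qed

lemma affine_weight_interval_sum_nonneg:
  fixes a b k m :: nat and \<tau> :: real
  assumes "a \<le> m" "m \<le> b" "m < k" and "0 < \<tau>"
    and dom: "k \<le> b \<Longrightarrow> real b - real k + 1 \<le> \<tau> * ((real b + 1) * (real b - real m))"
  shows "0 \<le> (\<Sum>i=a..b. \<tau> * (2 * real i - real m) - (if k \<le> i then 1 else 0))"
proof -
  have "(\<Sum>i=a..b. 2 * real i - real m) = 2 * (\<Sum>i=a..b. real i) - real (b - a + 1) * real m"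
    using assms by (simp add: sum_subtractf sum_distrib_left Suc_diff_le)
  then have "(\<Sum>i=a..b. \<tau> * (2 * real i - real m) - (if k \<le> i then 1 else 0))
      = \<tau> * (2 * (\<Sum>i=a..b. real i) - real (b - a + 1) * real m) - real (b + 1 - k)"
    using assms count_ge_atLeastAtMost[of a k b] by (simp add: sum_subtractf sum_distrib_left[symmetric])
  also have "\<dots> = \<tau> * (real (b - a + 1) * (real a + real b - real m)) - real (b + 1 - k)"
    using assms by (simp only: double_sum_atLeastAtMost_real) (simp add: algebra_simps)
  also have "0 \<le> \<dots>"
  proof (cases "k \<le> b")
    case True
    have "real (b - a + 1) * (real a + real b - real m) - (real b + 1) * (real b - real m)
        = real a * (real m + 1 - real a)"
      using assms by (simp add: algebra_simps)
    moreover have "0 \<le> real a * (real m + 1 - real a)" using assms by simp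
    ultimately have "\<tau> * ((real b + 1) * (real b - real m)) \<le> \<tau> * (real (b - a + 1) * (real a + real b - real m))"
      using \<open>0 < \<tau>\<close> by simp
    then show ?thesis
      using dom True by (simp add: of_nat_diff)
  qed (use assms in simp)
  finally show ?thesis .
qed

lemma tail_le_affine_of_mean:
  fixes f :: "nat \<Rightarrow> real" and B k m :: nat and \<tau> :: real
  assumes f0: "\<And>i. i \<le> B \<Longrightarrow> 0 \<le> f i" and s1: "(\<Sum>i\<le>B. f i) = 1"
    and mk: "m < k" and kB: "k \<le> B"
    and up: "\<And>i j. i \<le> j \<Longrightarrow> j \<le> m \<Longrightarrow> f i \<le> f j"
    and down: "\<And>i j. m \<le> i \<Longrightarrow> i \<le> j \<Longrightarrow> j \<le> B \<Longrightarrow> f j \<le> f i"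
    and dom: "\<And>b. k \<le> b \<Longrightarrow> b \<le> B \<Longrightarrow> real b - real k + 1 \<le> \<tau> * ((real b + 1) * (real b - real m))"
  shows "(\<Sum>i=k..B. f i) \<le> \<tau> * (2 * (\<Sum>i\<le>B. real i * f i) - real m)"
proof -
  define w where "w i = \<tau> * (2 * real i - real m) - (if k \<le> i then 1 else 0)" for i
  have "0 < \<tau> * ((real k + 1) * (real k - real m))" "0 < (real k + 1) * (real k - real m)"
    using dom[of k] kB mk by auto
  then have "0 < \<tau>" by (rule zero_less_mult_pos2)
  then have "0 \<le> (\<Sum>i=a..b. w i)" if "a \<le> m" "m \<le> b" "b \<le> B" for a b
    unfolding w_def using that mk dom[of b] by (intro affine_weight_interval_sum_nonneg) auto
  then have "0 \<le> (\<Sum>i=0..B. w i * f i)"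
    using f0 up down kB mk by (intro sum_mult_unimodal_nonneg[of 0 m]) auto
  also have "(\<Sum>i=0..B. w i * f i) = \<tau> * (2 * (\<Sum>i\<le>B. real i * f i) - real m) - (\<Sum>i=k..B. f i)"
  proof -
    have "w i * f i = 2 * \<tau> * (real i * f i) - \<tau> * real m * f i - (if k \<le> i then f i else 0)" for i
      by (simp add: w_def algebra_simps)
    then have "(\<Sum>i=0..B. w i * f i) = (\<Sum>i\<le>B. 2 * \<tau> * (real i * f i)) - (\<Sum>i\<le>B. \<tau> * real m * f i)
        - (\<Sum>i\<le>B. if k \<le> i then f i else 0)"
      by (simp only: atLeast0AtMost sum_subtractf)
    moreover have "(\<Sum>i\<le>B. if k \<le> i then f i else 0) = (\<Sum>i=k..B. f i)"
      using sum_atMost_split[OF kB, of "\<lambda>i. if k \<le> i then f i else 0"] by simp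
    ultimately show ?thesis
      using s1 by (simp only: mult.assoc sum_distrib_left[symmetric]) (simp add: algebra_simps)
  qed
  finally show ?thesis by simp
qed

lemma tail_mult_le_sum:
  fixes f :: "nat \<Rightarrow> real"
  assumes "\<And>i. i \<le> B \<Longrightarrow> 0 \<le> f i"
  shows "real k * (\<Sum>i=k..B. f i) \<le> (\<Sum>i=k..B. real i * f i)"
  unfolding sum_distrib_left using assms by (intro sum_mono mult_right_mono) auto

lemma markov_sum:
  fixes f :: "nat \<Rightarrow> real"
  assumes f0: "\<And>i. i \<le> B \<Longrightarrow> 0 \<le> f i" and kB: "k \<le> B"
  shows "real k * (\<Sum>i=k..B. f i) \<le> (\<Sum>i\<le>B. real i * f i)"
proof -
  have "real k * (\<Sum>i=k..B. f i) \<le> (\<Sum>i=k..B. real i * f i)"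
    using f0 by (rule tail_mult_le_sum)
  moreover have "0 \<le> (\<Sum>i<k. real i * f i)"
    using f0 kB by (intro sum_nonneg mult_nonneg_nonneg) auto
  ultimately show ?thesis
    using sum_atMost_split[OF kB, of "\<lambda>i. real i * f i"] by linarith
qed

lemma tail_bound_increasing_prefix:
  fixes f :: "nat \<Rightarrow> real"
  assumes f0: "\<And>i. i \<le> B \<Longrightarrow> 0 \<le> f i" and s1: "(\<Sum>i\<le>B. f i) = 1" and kB: "k \<le> B"
    and up: "\<And>i j. i \<le> j \<Longrightarrow> j < k \<Longrightarrow> f i \<le> f j"
  shows "(real k + 1) * (\<Sum>i=k..B. f i) \<le> 2 * (\<Sum>i\<le>B. real i * f i) - real k + 1"
proof -
  define P where "P = (\<Sum>i=k..B. f i)"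
  have "(\<Sum>i<k. f i) = 1 - P"
    using sum_atMost_split[OF kB, of f] s1 unfolding P_def by simp
  then have "(real k - 1) * (1 - P) \<le> 2 * (\<Sum>i<k. real i * f i)"
    using sum_index_mult_ge_of_increasing[of k f] up by simp
  moreover have "real k * P \<le> (\<Sum>i=k..B. real i * f i)"
    using f0 unfolding P_def by (rule tail_mult_le_sum)
  moreover have "(\<Sum>i\<le>B. real i * f i) = (\<Sum>i<k. real i * f i) + (\<Sum>i=k..B. real i * f i)"
    using sum_atMost_split[OF kB] .
  ultimately show ?thesis
    unfolding P_def[symmetric] by (simp add: algebra_simps)
qed

text \<open>\<open>(b - k + 1) / (b + 1)\<close> is the tail beyond \<open>k\<close> of the uniform distribution on \<open>{0..b}\<close>,
  whose mean is \<open>b / 2\<close>.\<close>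

lemma uniform_tail_bound_of_mean_le:
  fixes b k m M P :: real
  assumes "0 \<le> m" "m < b" "k \<le> b + 1" "2 * M \<le> b"
    and window: "(b + 1) * (b - m) * P \<le> (b - k + 1) * (2 * M - m)"
  shows "b * (b + 1) * P \<le> 2 * M * (b - k + 1)"
proof -
  have "b * (2 * M - m) \<le> (b - m) * (2 * M)"
    using assms(1,4) mult_right_mono[of "2 * M" b m] by (simp add: algebra_simps)
  then have "(b - k + 1) * (b * (2 * M - m)) \<le> (b - k + 1) * ((b - m) * (2 * M))"
    using assms(3) by (intro mult_left_mono) auto
  then have "b * ((b - k + 1) * (2 * M - m)) \<le> (b - m) * (2 * M * (b - k + 1))"
    by (simp only: mult_ac)
  moreover have "b * ((b + 1) * (b - m) * P) \<le> b * ((b - k + 1) * (2 * M - m))"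
    using window assms(1,2) by (intro mult_left_mono) auto
  ultimately have "(b - m) * (b * (b + 1) * P) \<le> (b - m) * (2 * M * (b - k + 1))"
    by (simp add: algebra_simps)
  then show ?thesis using assms(2) by simp
qed

lemma prefix_tail_bound_of_mean_ge:
  fixes b k m M P :: real
  assumes "0 \<le> m" "m + 2 \<le> k" "k \<le> b" "b \<le> 2 * M"
    and window: "(b + 1) * (b - m) * P \<le> (b - k + 1) * (2 * M - m)"
  shows "(k + 1) * P \<le> 2 * M - k + 1"
proof -
  define C where "C = (b + 1) * (b - m) - (b - k + 1) * (k + 1)"
  have "(b - k + 1) * (k + 1) \<le> (b + 1) * (b - k + 2)"
  proof -
    have "(b + 1) * (b - k + 2) - (b - k + 1) * (k + 1) = (b + 1) + (b - k + 1) * (b - k)"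
      by (simp add: algebra_simps)
    moreover have "0 \<le> (b - k + 1) * (b - k)" using assms by simp
    ultimately show ?thesis using assms by linarith
  qed
  moreover have "(b + 1) * (b - k + 2) \<le> (b + 1) * (b - m)"
    using assms by (intro mult_left_mono) auto
  ultimately have "0 \<le> C" unfolding C_def by linarith
  have "(2 * M - k + 1) * ((b + 1) * (b - m)) - (k + 1) * ((b - k + 1) * (2 * M - m))
      = (2 * M - b) * C + (b - k + 1) * (b - m) * (b - k)"
    unfolding C_def by (simp add: algebra_simps)
  moreover have "0 \<le> (2 * M - b) * C" using assms \<open>0 \<le> C\<close> by simp
  moreover have "0 \<le> (b - k + 1) * (b - m) * (b - k)" using assms by simp
  moreover have "(k + 1) * ((b + 1) * (b - m) * P) \<le> (k + 1) * ((b - k + 1) * (2 * M - m))"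
    using window assms by (intro mult_left_mono) auto
  ultimately have "((b + 1) * (b - m)) * ((k + 1) * P) \<le> ((b + 1) * (b - m)) * (2 * M - k + 1)"
    by (simp add: algebra_simps)
  moreover have "0 < (b + 1) * (b - m)" using assms by simp
  ultimately show ?thesis by (simp only: mult_le_cancel_left_pos)
qed

lemma tail_bound_mode_below:
  fixes f :: "nat \<Rightarrow> real" and B k m :: nat
  assumes f0: "\<And>i. i \<le> B \<Longrightarrow> 0 \<le> f i" and s1: "(\<Sum>i\<le>B. f i) = 1"
    and mk: "m + 2 \<le> k" and kB: "k \<le> B"
    and up: "\<And>i j. i \<le> j \<Longrightarrow> j \<le> m \<Longrightarrow> f i \<le> f j"
    and down: "\<And>i j. m \<le> i \<Longrightarrow> i \<le> j \<Longrightarrow> j \<le> B \<Longrightarrow> f j \<le> f i"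
  defines "M \<equiv> \<Sum>i\<le>B. real i * f i" and "P \<equiv> \<Sum>i=k..B. f i"
  shows "(real k + 1) * P \<le> 2 * M - real k + 1
    \<or> (\<exists>b. k \<le> b \<and> b \<le> B \<and> real b * (real b + 1) * P \<le> 2 * M * (real b - real k + 1))"
proof -
  txt \<open>The least slope \<open>\<tau>\<close> admissible in \<open>tail_le_affine_of_mean\<close> is \<open>g b\<close> for a maximiser \<open>b\<close>.\<close>
  define g where "g b = (real b - real k + 1) / ((real b + 1) * (real b - real m))" for b
  have fin: "finite (g ` {k..B})" "g ` {k..B} \<noteq> {}" using kB by auto
  obtain b where b: "k \<le> b" "b \<le> B" "g b = Max (g ` {k..B})"
    using Max_in[OF fin] by auto
  have "real b' - real k + 1 \<le> g b * ((real b' + 1) * (real b' - real m))" if "k \<le> b'" "b' \<le> B" for b'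
  proof -
    have "g b' \<le> g b" using b(3) Max_ge[OF fin(1)] that by auto
    moreover have "0 < (real b' + 1) * (real b' - real m)" using that mk by simp
    ultimately show ?thesis unfolding g_def[of b'] by (simp add: divide_le_eq)
  qed
  then have "P \<le> g b * (2 * M - real m)"
    unfolding P_def M_def using mk by (intro tail_le_affine_of_mean[OF f0 s1 _ kB up down]) auto
  moreover have "0 < (real b + 1) * (real b - real m)" using b mk by simp
  ultimately have window: "(real b + 1) * (real b - real m) * P \<le> (real b - real k + 1) * (2 * M - real m)"
    by (simp add: g_def le_divide_eq mult_ac)
  show ?thesis
  proof (cases "2 * M \<le> real b")
    case True
    then show ?thesis
      using uniform_tail_bound_of_mean_le[OF _ _ _ True window] b mk by auto
  next
    case False
    then show ?thesis
      using prefix_tail_bound_of_mean_ge[OF _ _ _ _ window] b mk by simp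
  qed
qed

lemma uniform_tail_ratio_le:
  fixes b k :: nat
  assumes "1 \<le> k" "k \<le> b"
  shows "2 * (real b - real k + 1) * (2 * real k - 1) \<le> real b * (real b + 1)"
proof -
  have "real b * (real b + 1) - 2 * (real b - real k + 1) * (2 * real k - 1)
      = (real b - 2 * real k + 1) * (real b - 2 * real k + 2)"
    by (simp add: algebra_simps)
  moreover have "0 \<le> (real b - 2 * real k + 1) * (real b - 2 * real k + 2)"
    by (cases "b + 2 \<le> 2 * k") (simp_all add: mult_nonpos_nonpos)
  ultimately show ?thesis by linarith
qed

lemma uniform_tail_ratio_mono:
  fixes b k B :: nat
  assumes "k \<le> b" "b \<le> B" "B < 2 * k"
  shows "(real b - real k + 1) * (real B * (real B + 1)) \<le> (real B - real k + 1) * (real b * (real b + 1))"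
proof -
  define G where "G = real b * (real b + 1) - (real b - real k + 1) * (real B + real b + 1)"
  have "(real B - real k + 1) * (real b * (real b + 1)) - (real b - real k + 1) * (real B * (real B + 1))
      = (real B - real b) * G"
    unfolding G_def by (simp add: algebra_simps)
  moreover have "0 \<le> G" if "b < B"
  proof -
    have "(real b - real k + 1) * (real B + real b + 1) \<le> (real b - real k + 1) * (2 * real k + real b)"
      using assms by (intro mult_left_mono) auto
    moreover have "real b * (real b + 1) - (real b - real k + 1) * (2 * real k + real b)
        = real k * (2 * real k - 2 - real b)"
      by (simp add: algebra_simps)
    moreover have "0 \<le> real k * (2 * real k - 2 - real b)" using that assms by simp
    ultimately show ?thesis unfolding G_def by linarith
  qed
  then have "0 \<le> (real B - real b) * G"
    using assms(2) by (cases "b = B") auto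
  ultimately show ?thesis by linarith
qed

lemma tail_bounds_of_uniform_tail_bound:
  fixes b k B :: nat and M P :: real
  assumes "1 \<le> k" "k \<le> b" "b \<le> B" "0 \<le> M"
    and window: "real b * (real b + 1) * P \<le> 2 * M * (real b - real k + 1)"
  shows "(2 * real k - 1) * P \<le> M"
    and "B < 2 * k \<Longrightarrow> real B * (real B + 1) * P \<le> 2 * M * (real B - real k + 1)"
proof -
  have pos: "0 < real b * (real b + 1)" using assms by simp
  have "real b * (real b + 1) * ((2 * real k - 1) * P) \<le> (2 * real k - 1) * (2 * M * (real b - real k + 1))"
    using mult_left_mono[OF window, of "2 * real k - 1"] assms by (simp add: mult_ac)
  also have "\<dots> = M * (2 * (real b - real k + 1) * (2 * real k - 1))"
    by (simp add: algebra_simps)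
  also have "\<dots> \<le> M * (real b * (real b + 1))"
    using uniform_tail_ratio_le[of k b] assms by (intro mult_left_mono) auto
  also have "\<dots> = real b * (real b + 1) * M"
    by simp
  finally show "(2 * real k - 1) * P \<le> M"
    using pos by (rule mult_left_le_imp_le)
  assume "B < 2 * k"
  have "real b * (real b + 1) * (real B * (real B + 1) * P)
      \<le> real B * (real B + 1) * (2 * M * (real b - real k + 1))"
    using mult_left_mono[OF window, of "real B * (real B + 1)"] by (simp add: mult_ac)
  also have "\<dots> = 2 * M * ((real b - real k + 1) * (real B * (real B + 1)))"
    by (simp add: algebra_simps)
  also have "\<dots> \<le> 2 * M * ((real B - real k + 1) * (real b * (real b + 1)))"
    using uniform_tail_ratio_mono[of k b B] \<open>B < 2 * k\<close> assms by (intro mult_left_mono) auto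
  also have "\<dots> = real b * (real b + 1) * (2 * M * (real B - real k + 1))"
    by (simp add: algebra_simps)
  finally show "real B * (real B + 1) * P \<le> 2 * M * (real B - real k + 1)"
    using pos by (rule mult_left_le_imp_le)
qed

lemma tail_bound_cases:
  fixes f :: "nat \<Rightarrow> real" and B k :: nat
  assumes pmf: "is_pmf_on_grid B f" and uni: "unimodal_grid B f" and kB: "k \<le> B"
  defines "M \<equiv> \<Sum>i\<le>B. real i * f i" and "P \<equiv> grid_tail B f k"
  shows "(real k + 1) * P \<le> 2 * M - real k + 1
    \<or> (2 \<le> k \<and> (2 * real k - 1) * P \<le> M
        \<and> (B < 2 * k \<longrightarrow> real B * (real B + 1) * P \<le> 2 * M * (real B - real k + 1)))"
proof -
  have f0: "\<And>i. i \<le> B \<Longrightarrow> 0 \<le> f i" and s1: "(\<Sum>i\<le>B. f i) = 1"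
    using pmf unfolding is_pmf_on_grid_def by auto
  obtain m where mB: "m \<le> B" and up: "\<And>i j. i \<le> j \<Longrightarrow> j \<le> m \<Longrightarrow> f i \<le> f j"
      and down: "\<And>i j. m \<le> i \<Longrightarrow> i \<le> j \<Longrightarrow> j \<le> B \<Longrightarrow> f j \<le> f i"
    using uni unfolding unimodal_grid_def by blast
  have "0 \<le> M" unfolding M_def using f0 by (intro sum_nonneg) auto
  show ?thesis
  proof (cases "k \<le> m + 1")
    case True
    then have "(real k + 1) * P \<le> 2 * M - real k + 1"
      unfolding M_def P_def grid_tail_def
      using up by (intro tail_bound_increasing_prefix[OF _ s1 kB] f0) auto
    then show ?thesis ..
  next
    case False
    then have "m + 2 \<le> k" by simp
    with tail_bound_mode_below[OF f0 s1 this kB up down]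
    consider "(real k + 1) * P \<le> 2 * M - real k + 1"
      | b where "k \<le> b" "b \<le> B" "real b * (real b + 1) * P \<le> 2 * M * (real b - real k + 1)"
      unfolding M_def P_def grid_tail_def by blast
    then show ?thesis
    proof cases
      case 2
      then show ?thesis
        using tail_bounds_of_uniform_tail_bound[of k b B M P] \<open>m + 2 \<le> k\<close> \<open>0 \<le> M\<close> by auto
    qed simp
  qed
qed

lemma grid_mean_eq: "grid_mean B f = (\<Sum>i\<le>B. real i * f i) / real B"
  unfolding grid_mean_def by (simp add: sum_divide_distrib)

lemma grid_tail_bound_cases:
  fixes f :: "nat \<Rightarrow> real" and B k :: nat
  assumes B: "1 \<le> B" and pmf: "is_pmf_on_grid B f" and uni: "unimodal_grid B f" and kB: "k \<le> B"
  defines "t \<equiv> real k / real B" and "\<beta> \<equiv> 1 / real B"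
    and "\<eta> \<equiv> grid_mean B f" and "P \<equiv> grid_tail B f k"
  shows "P \<le> (2 * \<eta> - t + \<beta>) / (t + \<beta>)
    \<or> (2 * \<beta> \<le> t \<and> P \<le> \<eta> / (2 * t - \<beta>)
        \<and> (1/2 < t \<longrightarrow> P \<le> 2 * \<eta> * (1 - t + \<beta>) / (1 + \<beta>)))"
proof -
  define M where "M = (\<Sum>i\<le>B. real i * f i)"
  have N: "0 < real B" using B by simp
  have \<eta>: "\<eta> = M / real B" unfolding \<eta>_def M_def grid_mean_eq ..
  have "(2 * \<eta> - t + \<beta>) / (t + \<beta>) = (2 * M - real k + 1) / (real k + 1)"
    unfolding \<eta> t_def \<beta>_def using N
    by (simp add: add_divide_distrib[symmetric] diff_divide_distrib[symmetric])
  then have "P \<le> (2 * \<eta> - t + \<beta>) / (t + \<beta>) \<longleftrightarrow> (real k + 1) * P \<le> 2 * M - real k + 1"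
    by (simp add: pos_le_divide_eq mult.commute)
  moreover have "2 * \<beta> \<le> t \<longleftrightarrow> 2 \<le> k"
    unfolding t_def \<beta>_def using N by (simp add: field_simps)
  moreover have "P \<le> \<eta> / (2 * t - \<beta>) \<longleftrightarrow> (2 * real k - 1) * P \<le> M" if "2 \<le> k"
    unfolding \<eta> t_def \<beta>_def using N that by (simp add: field_simps)
  moreover have "1/2 < t \<longleftrightarrow> B < 2 * k"
    unfolding t_def using N by (simp add: field_simps) linarith
  moreover have "2 * \<eta> * (1 - t + \<beta>) / (1 + \<beta>) = 2 * M * (real B - real k + 1) / (real B * (real B + 1))"
    unfolding \<eta> t_def \<beta>_def using N by (simp add: divide_simps)
  then have "P \<le> 2 * \<eta> * (1 - t + \<beta>) / (1 + \<beta>)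
      \<longleftrightarrow> real B * (real B + 1) * P \<le> 2 * M * (real B - real k + 1)"
    using N by (simp add: pos_le_divide_eq mult.commute)
  ultimately show ?thesis
    using tail_bound_cases[OF pmf uni kB] unfolding M_def P_def by auto
qed

lemma grid_markov:
  assumes pmf: "is_pmf_on_grid B f" and kB: "k \<le> B"
  shows "real k / real B * grid_tail B f k \<le> grid_mean B f"
proof -
  have "real k * grid_tail B f k \<le> (\<Sum>i\<le>B. real i * f i)"
    using pmf kB unfolding is_pmf_on_grid_def grid_tail_def by (intro markov_sum) auto
  then show ?thesis
    unfolding grid_mean_eq by (simp add: divide_right_mono)
qed

lemma grid_mean_bounds:
  assumes "is_pmf_on_grid B f"
  shows "0 \<le> grid_mean B f" "grid_mean B f \<le> 1"
proof -
  have f0: "\<And>i. i \<le> B \<Longrightarrow> 0 \<le> f i" and s1: "(\<Sum>i\<le>B. f i) = 1"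
    using assms unfolding is_pmf_on_grid_def by auto
  show "0 \<le> grid_mean B f"
    unfolding grid_mean_def using f0 by (intro sum_nonneg) auto
  have "grid_mean B f \<le> (\<Sum>i\<le>B. f i)"
    unfolding grid_mean_def using f0 by (intro sum_mono mult_left_le_one_le) (auto simp: divide_le_eq_1)
  then show "grid_mean B f \<le> 1" using s1 by simp
qed

lemma second_bound_le_first_bound:
  fixes \<eta> t \<beta> :: real
  assumes "0 < \<beta>" "\<beta> \<le> t" "2 * t - \<beta> \<le> 3 * \<eta>"
  shows "\<eta> / (2 * t - \<beta>) \<le> (2 * \<eta> - t + \<beta>) / (t + \<beta>)"
proof -
  have "(2 * \<eta> - t + \<beta>) * (2 * t - \<beta>) - \<eta> * (t + \<beta>) = (t - \<beta>) * (3 * \<eta> - 2 * t + \<beta>)"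
    by (simp add: algebra_simps)
  moreover have "0 \<le> (t - \<beta>) * (3 * \<eta> - 2 * t + \<beta>)" using assms by simp
  ultimately have "\<eta> * (t + \<beta>) \<le> (2 * \<eta> - t + \<beta>) * (2 * t - \<beta>)" by linarith
  then show ?thesis using assms by (simp add: divide_simps)
qed

lemma first_bound_le_second_bound:
  fixes \<eta> t \<beta> :: real
  assumes "0 < \<beta>" "\<beta> \<le> t" "3 * \<eta> \<le> 2 * t - \<beta>"
  shows "(2 * \<eta> - t + \<beta>) / (t + \<beta>) \<le> \<eta> / (2 * t - \<beta>)"
proof -
  have "(2 * \<eta> - t + \<beta>) * (2 * t - \<beta>) - \<eta> * (t + \<beta>) = (t - \<beta>) * (3 * \<eta> - 2 * t + \<beta>)"
    by (simp add: algebra_simps)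
  moreover have "(t - \<beta>) * (3 * \<eta> - 2 * t + \<beta>) \<le> 0" using assms by (simp add: mult_nonneg_nonpos)
  ultimately have "(2 * \<eta> - t + \<beta>) * (2 * t - \<beta>) \<le> \<eta> * (t + \<beta>)" by linarith
  then show ?thesis using assms by (simp add: divide_simps)
qed

lemma first_bound_le_third_bound:
  fixes \<eta> t \<beta> :: real
  assumes "0 < \<beta>" "\<beta> \<le> t" "t \<le> 1" "1 + \<beta> \<le> 2 * t" "0 \<le> \<eta>" "3 * \<eta> \<le> 1"
  shows "(2 * \<eta> - t + \<beta>) / (t + \<beta>) \<le> 2 * \<eta> * (1 - t + \<beta>) / (1 + \<beta>)"
proof -
  define c where "c = (1 + \<beta>) - (1 - t + \<beta>) * (t + \<beta>)"
  have "c = (1 - t) + (t - \<beta>) * (t + \<beta>)" unfolding c_def by (simp add: algebra_simps)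
  then have "0 \<le> c" using assms by simp
  have "(2 * \<eta> - t + \<beta>) * (1 + \<beta>) - 2 * \<eta> * (1 - t + \<beta>) * (t + \<beta>)
      = 2 * \<eta> * c - (t - \<beta>) * (1 + \<beta>)"
    unfolding c_def by (simp add: algebra_simps)
  moreover have "2 * \<eta> * c \<le> 2 / 3 * c" using assms \<open>0 \<le> c\<close> by (intro mult_right_mono) auto
  moreover have "2 * c - 3 * ((t - \<beta>) * (1 + \<beta>)) = (2 * t - 1 - \<beta>) * (t - 2 - \<beta>)"
    unfolding c_def by (simp add: algebra_simps)
  moreover have "(2 * t - 1 - \<beta>) * (t - 2 - \<beta>) \<le> 0" using assms by (simp add: mult_nonneg_nonpos)
  ultimately have "(2 * \<eta> - t + \<beta>) * (1 + \<beta>) \<le> 2 * \<eta> * (1 - t + \<beta>) * (t + \<beta>)"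
    by linarith
  then show ?thesis using assms by (simp add: divide_simps)
qed

lemma two_mean_le_of_discriminant_pos:
  fixes \<eta> \<beta> :: real
  assumes "0 < \<eta>" "\<eta> \<le> 1" "0 < \<beta>" "\<beta> \<le> 1"
    and d: "0 < -2 * (\<eta> - 1/2) * (6 * \<eta> + 1) + (2 - 4 * \<eta>) * \<beta> + (4 * \<eta> - 1)^2 * \<beta>^2"
  shows "2 * \<eta> \<le> 1 + \<beta>"
proof (rule ccontr)
  assume "\<not> 2 * \<eta> \<le> 1 + \<beta>"
  define w where "w = 2 * \<eta> - 1 - \<beta>"
  have w: "0 < w" "w \<le> 1 - \<beta>" using \<open>\<not> 2 * \<eta> \<le> 1 + \<beta>\<close> assms unfolding w_def by auto
  have "-2 * (\<eta> - 1/2) * (6 * \<eta> + 1) + (2 - 4 * \<eta>) * \<beta> + (4 * \<eta> - 1)^2 * \<beta>^2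
      = w\<^sup>2 - 4 * (1 - \<beta>) * ((w + 1 + \<beta>) * (1 + \<beta>) * (w + \<beta>))"
    unfolding w_def by (simp add: algebra_simps power2_eq_square)
  moreover have "w \<le> (w + 1 + \<beta>) * (1 + \<beta>) * (w + \<beta>)"
  proof -
    have "1 * 1 \<le> (w + 1 + \<beta>) * (1 + \<beta>)"
      using w assms by (intro mult_mono) auto
    then have "1 * w \<le> ((w + 1 + \<beta>) * (1 + \<beta>)) * (w + \<beta>)"
      using w assms by (intro mult_mono) auto
    then show ?thesis by simp
  qed
  then have "4 * (1 - \<beta>) * w \<le> 4 * (1 - \<beta>) * ((w + 1 + \<beta>) * (1 + \<beta>) * (w + \<beta>))"
    using assms by (intro mult_left_mono) auto
  moreover have "w\<^sup>2 \<le> (1 - \<beta>) * w"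
    using w unfolding power2_eq_square by (intro mult_right_mono) auto
  moreover have "0 \<le> (1 - \<beta>) * w" using w assms by simp
  ultimately show False using d by linarith
qed

lemma first_minus_third_bound:
  fixes \<eta> t \<beta> d :: real
  assumes "0 < \<eta>" "0 < \<beta>" "0 \<le> t"
    and d: "d = -2 * (\<eta> - 1/2) * (6 * \<eta> + 1) + (2 - 4 * \<eta>) * \<beta> + (4 * \<eta> - 1)^2 * \<beta>^2"
  defines "z \<equiv> 1/2 + (1 + \<beta>) / (4 * \<eta>) - t"
  shows "(2 * \<eta> - t + \<beta>) / (t + \<beta>) - 2 * \<eta> * (1 - t + \<beta>) / (1 + \<beta>)
       = (16 * \<eta>\<^sup>2 * z\<^sup>2 - d) / (8 * \<eta> * ((t + \<beta>) * (1 + \<beta>)))"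
proof -
  define q where "q = 2 * \<eta> * (t + \<beta>)\<^sup>2 - (2 * \<eta> * (1 + 2 * \<beta>) + 1 + \<beta>) * (t + \<beta>)
    + (2 * \<eta> + 2 * \<beta>) * (1 + \<beta>)"
  have "(16 * \<eta>\<^sup>2 * z\<^sup>2 - d) / (8 * \<eta>) = q"
    unfolding z_def d q_def using assms by (simp add: field_simps power2_eq_square)
  moreover have "(2 * \<eta> - t + \<beta>) / (t + \<beta>) - 2 * \<eta> * (1 - t + \<beta>) / (1 + \<beta>)
      = q / ((t + \<beta>) * (1 + \<beta>))"
    unfolding q_def using assms by (simp add: field_simps power2_eq_square)
  ultimately have "(2 * \<eta> - t + \<beta>) / (t + \<beta>) - 2 * \<eta> * (1 - t + \<beta>) / (1 + \<beta>)
      = (16 * \<eta>\<^sup>2 * z\<^sup>2 - d) / (8 * \<eta>) / ((t + \<beta>) * (1 + \<beta>))"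
    by simp
  then show ?thesis by (simp add: divide_divide_eq_left)
qed

lemma first_third_bound_order:
  fixes \<eta> t \<beta> d :: real
  assumes "0 < \<eta>" "\<eta> \<le> 1" "0 < \<beta>" "\<beta> \<le> 1" "0 \<le> t"
    and d: "d = -2 * (\<eta> - 1/2) * (6 * \<eta> + 1) + (2 - 4 * \<eta>) * \<beta> + (4 * \<eta> - 1)^2 * \<beta>^2"
  defines "c \<equiv> 1/2 + 1 / (4 * \<eta>) * (1 + \<beta> - sqrt d)"
    and "B1 \<equiv> (2 * \<eta> - t + \<beta>) / (t + \<beta>)" and "B3 \<equiv> 2 * \<eta> * (1 - t + \<beta>) / (1 + \<beta>)"
  shows "d \<le> 0 \<Longrightarrow> B3 \<le> B1"
    and "0 < d \<Longrightarrow> t \<le> c \<Longrightarrow> B3 \<le> B1"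
    and "0 < d \<Longrightarrow> c < t \<Longrightarrow> t \<le> 1 \<Longrightarrow> B1 \<le> B3"
proof -
  define z where "z = 1/2 + (1 + \<beta>) / (4 * \<eta>) - t"
  define s where "s = sqrt d / (4 * \<eta>)"
  define D where "D = 8 * \<eta> * ((t + \<beta>) * (1 + \<beta>))"
  have diff: "B1 - B3 = (16 * \<eta>\<^sup>2 * z\<^sup>2 - d) / D"
    unfolding B1_def B3_def z_def D_def using first_minus_third_bound[OF assms(1,3,5) d] .
  have "0 < D" unfolding D_def using assms by simp
  have above: "B3 \<le> B1" if "d \<le> 16 * \<eta>\<^sup>2 * z\<^sup>2"
    using diff that \<open>0 < D\<close> divide_nonneg_pos[of "16 * \<eta>\<^sup>2 * z\<^sup>2 - d" D] by linarith
  have below: "B1 \<le> B3" if "16 * \<eta>\<^sup>2 * z\<^sup>2 \<le> d"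
    using diff that \<open>0 < D\<close> divide_nonpos_pos[of "16 * \<eta>\<^sup>2 * z\<^sup>2 - d" D] by linarith
  have s: "16 * \<eta>\<^sup>2 * s\<^sup>2 = d" "0 \<le> s" if "0 \<le> d"
    unfolding s_def using assms(1) that by (simp_all add: power_divide)
  have zcs: "z = c - t + s" unfolding z_def c_def s_def using assms(1) by (simp add: field_simps)
  show "B3 \<le> B1" if "d \<le> 0"
    using above that by (simp add: order_trans[OF that])
  show "B3 \<le> B1" if "0 < d" "t \<le> c"
  proof (rule above)
    have "s\<^sup>2 \<le> z\<^sup>2" using s zcs that by (intro power_mono) auto
    then show "d \<le> 16 * \<eta>\<^sup>2 * z\<^sup>2"
      using s that mult_left_mono[of "s\<^sup>2" "z\<^sup>2" "16 * \<eta>\<^sup>2"] by simp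
  qed
  show "B1 \<le> B3" if "0 < d" "c < t" "t \<le> 1"
  proof (rule below)
    have "2 * \<eta> \<le> 1 + \<beta>"
      using two_mean_le_of_discriminant_pos[of \<eta> \<beta>] assms(1-4) d that by simp
    then have "1/2 \<le> (1 + \<beta>) / (4 * \<eta>)" using assms(1) by (simp add: field_simps)
    then have "0 \<le> z" unfolding z_def using that by linarith
    then have "z\<^sup>2 \<le> s\<^sup>2" using s zcs that by (intro power_mono) auto
    then show "16 * \<eta>\<^sup>2 * z\<^sup>2 \<le> d"
      using s that mult_left_mono[of "z\<^sup>2" "s\<^sup>2" "16 * \<eta>\<^sup>2"] by simp
  qed
qed

lemma grid_spacing:
  fixes B k :: nat
  defines "t \<equiv> real k / real B" and "\<beta> \<equiv> 1 / real B"
  assumes "1 \<le> B"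
  shows "0 < t \<Longrightarrow> \<beta> \<le> t"
    and "0 < t \<Longrightarrow> t < 2 * \<beta> \<Longrightarrow> t = \<beta>"
    and "1/2 < t \<Longrightarrow> 1 + \<beta> \<le> 2 * t"
proof -
  have N: "0 < real B" using assms by simp
  show "0 < t \<Longrightarrow> \<beta> \<le> t" and "0 < t \<Longrightarrow> t < 2 * \<beta> \<Longrightarrow> t = \<beta>"
    using N unfolding t_def \<beta>_def by (simp_all add: field_simps)
  assume "1/2 < t"
  then have "B < 2 * k" using N unfolding t_def by (simp add: field_simps)
  then have "(real B + 1) / real B \<le> 2 * real k / real B"
    using N by (intro divide_right_mono) auto
  then show "1 + \<beta> \<le> 2 * t" using N unfolding t_def \<beta>_def by (simp add: add_divide_distrib)
qed

lemma tail_bound_small_mean: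
  fixes B k :: nat and \<eta> P :: real
  defines "t \<equiv> real k / real B" and "\<beta> \<equiv> 1 / real B"
  assumes B: "1 \<le> B" and kB: "k \<le> B" and \<eta>0: "0 \<le> \<eta>" and \<eta>3: "\<eta> \<le> 1/3"
    and markov: "t * P \<le> \<eta>"
    and cases: "P \<le> (2 * \<eta> - t + \<beta>) / (t + \<beta>)
      \<or> (2 * \<beta> \<le> t \<and> P \<le> \<eta> / (2 * t - \<beta>)
          \<and> (1/2 < t \<longrightarrow> P \<le> 2 * \<eta> * (1 - t + \<beta>) / (1 + \<beta>)))"
  shows "(\<eta> < t \<and> t \<le> min (3/2 * \<eta> + 1 / (2 * real B)) (2 * \<eta>)
           \<longrightarrow> P \<le> (2 * \<eta> - t + \<beta>) / (t + \<beta>))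
      \<and> (min (3/2 * \<eta> + 1 / (2 * real B)) (2 * \<eta>) < t \<and> t \<le> 1/2
           \<longrightarrow> P \<le> \<eta> / (2 * t - \<beta>))
      \<and> (1/2 < t \<and> t \<le> 1
           \<longrightarrow> P \<le> 2 * \<eta> * (1 - t + \<beta>) / (1 + \<beta>))"
proof -
  have "0 < \<beta>" unfolding \<beta>_def using B by simp
  have half_\<beta>: "1 / (2 * real B) = \<beta> / 2" unfolding \<beta>_def by simp
  note grid_pos = grid_spacing(1)[of B k, OF B, folded t_def \<beta>_def]
    and grid_one = grid_spacing(2)[of B k, OF B, folded t_def \<beta>_def]
    and grid_half = grid_spacing(3)[of B k, OF B, folded t_def \<beta>_def]
  have "P \<le> (2 * \<eta> - t + \<beta>) / (t + \<beta>)" if "\<eta> < t" "t \<le> min (3/2 * \<eta> + \<beta> / 2) (2 * \<eta>)"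
    using cases second_bound_le_first_bound[of \<beta> t \<eta>] that \<open>0 < \<beta>\<close> by auto
  moreover have "P \<le> \<eta> / (2 * t - \<beta>)" if "min (3/2 * \<eta> + \<beta> / 2) (2 * \<eta>) < t"
  proof (cases "P \<le> \<eta> / (2 * t - \<beta>)")
    case False
    with cases have P1: "P \<le> (2 * \<eta> - t + \<beta>) / (t + \<beta>)" by auto
    have "0 < t" using that \<eta>0 \<open>0 < \<beta>\<close> by linarith
    show ?thesis
    proof (cases "3 * \<eta> \<le> 2 * t - \<beta>")
      case True
      then show ?thesis
        using P1 first_bound_le_second_bound[of \<beta> t \<eta>] grid_pos \<open>0 < t\<close> \<open>0 < \<beta>\<close> by auto
    next
      case False
      then have "t = \<beta>" using that \<eta>0 \<open>0 < t\<close> grid_one by (auto simp: min_less_iff_disj)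
      then show ?thesis using markov \<open>0 < \<beta>\<close> by (simp add: pos_le_divide_eq mult.commute)
    qed
  qed
  moreover have "P \<le> 2 * \<eta> * (1 - t + \<beta>) / (1 + \<beta>)" if "1/2 < t" "t \<le> 1"
    using cases first_bound_le_third_bound[of \<beta> t \<eta>] that grid_pos grid_half \<eta>0 \<eta>3 \<open>0 < \<beta>\<close>
    by fastforce
  ultimately show ?thesis unfolding half_\<beta> by blast
qed

lemma tail_bound_large_mean:
  fixes \<eta> t \<beta> P d :: real
  assumes \<eta>3: "1/3 < \<eta>" and \<eta>1: "\<eta> \<le> 1" and "0 < \<beta>" "\<beta> \<le> 1" "0 \<le> t"
    and cases: "P \<le> (2 * \<eta> - t + \<beta>) / (t + \<beta>)
      \<or> (2 * \<beta> \<le> t \<and> P \<le> \<eta> / (2 * t - \<beta>)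
          \<and> (1/2 < t \<longrightarrow> P \<le> 2 * \<eta> * (1 - t + \<beta>) / (1 + \<beta>)))"
    and d: "d = -2 * (\<eta> - 1/2) * (6 * \<eta> + 1) + (2 - 4 * \<eta>) * \<beta> + (4 * \<eta> - 1)^2 * \<beta>^2"
  shows "(0 < d \<longrightarrow>
        (\<eta> < t \<and> t \<le> 1/2 + 1 / (4 * \<eta>) * (1 + \<beta> - sqrt d)
           \<longrightarrow> P \<le> (2 * \<eta> - t + \<beta>) / (t + \<beta>))
      \<and> (1/2 + 1 / (4 * \<eta>) * (1 + \<beta> - sqrt d) < t \<and> t \<le> 1
           \<longrightarrow> P \<le> 2 * \<eta> * (1 - t + \<beta>) / (1 + \<beta>)))
    \<and> (d \<le> 0 \<longrightarrow> P \<le> (2 * \<eta> - t + \<beta>) / (t + \<beta>))"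
proof -
  have "P \<le> (2 * \<eta> - t + \<beta>) / (t + \<beta>) \<or> P \<le> 2 * \<eta> * (1 - t + \<beta>) / (1 + \<beta>)"
    using cases second_bound_le_first_bound[of \<beta> t \<eta>] \<eta>3 \<open>0 < \<beta>\<close> by (cases "1/2 < t") auto
  moreover have "0 < \<eta>" using \<eta>3 by simp
  ultimately show ?thesis
    using first_third_bound_order[OF \<open>0 < \<eta>\<close> \<eta>1 assms(3-5) d] by fastforce
qed

theorem theorem3:
  fixes B k :: nat and f :: "nat \<Rightarrow> real"
  assumes B: "B \<ge> 1"
    and pmf: "is_pmf_on_grid B f"
    and uni: "unimodal_grid B f"
    and k: "k \<le> B"
  defines "t \<equiv> real k / real B"
    and "\<eta> \<equiv> grid_mean B f"
    and "P \<equiv> grid_tail B f k"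
    and "d \<equiv> - 2 * (grid_mean B f - 1/2) * (6 * grid_mean B f + 1)
              + (2 - 4 * grid_mean B f) / real B
              + (4 * grid_mean B f - 1)^2 / (real B)^2"
  shows
    "(\<eta> \<le> 1/3 \<longrightarrow>
        (\<eta> < t \<and> t \<le> min (3/2 * \<eta> + 1 / (2 * real B)) (2 * \<eta>)
           \<longrightarrow> P \<le> (2 * \<eta> - t + 1 / real B) / (t + 1 / real B))
      \<and> (min (3/2 * \<eta> + 1 / (2 * real B)) (2 * \<eta>) < t \<and> t \<le> 1/2
           \<longrightarrow> P \<le> \<eta> / (2 * t - 1 / real B))
      \<and> (1/2 < t \<and> t \<le> 1
           \<longrightarrow> P \<le> 2 * \<eta> * (1 - t + 1 / real B) / (1 + 1 / real B)))
   \<and> (\<eta> > 1/3 \<and> d > 0 \<longrightarrow>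
        (\<eta> < t \<and> t \<le> 1/2 + 1 / (4 * \<eta>) * (1 + 1 / real B - sqrt d)
           \<longrightarrow> P \<le> (2 * \<eta> - t + 1 / real B) / (t + 1 / real B))
      \<and> (1/2 + 1 / (4 * \<eta>) * (1 + 1 / real B - sqrt d) < t \<and> t \<le> 1
           \<longrightarrow> P \<le> 2 * \<eta> * (1 - t + 1 / real B) / (1 + 1 / real B)))
   \<and> (\<eta> > 1/3 \<and> d \<le> 0 \<longrightarrow>
        P \<le> (2 * \<eta> - t + 1 / real B) / (t + 1 / real B))"
proof -
  have \<beta>: "0 < 1 / real B" "1 / real B \<le> 1" using B by auto
  have t0: "0 \<le> real k / real B" by simp
  note mean = grid_mean_bounds[OF pmf, folded \<eta>_def]
  note cases = grid_tail_bound_cases[OF B pmf uni k, folded \<eta>_def P_def]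
  note markov = grid_markov[OF pmf k, folded \<eta>_def P_def]
  have d: "d = -2 * (\<eta> - 1/2) * (6 * \<eta> + 1) + (2 - 4 * \<eta>) * (1 / real B)
      + (4 * \<eta> - 1)^2 * (1 / real B)^2"
    unfolding d_def \<eta>_def by (simp add: power_divide)
  show ?thesis
    unfolding t_def
    using tail_bound_small_mean[OF B k mean(1) _ markov cases]
      tail_bound_large_mean[OF _ mean(2) \<beta> t0 cases d]
    by blast
qed

end
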